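(* Let $k,l'$ be positive integers with $l'<k$. Then for every $n$, \[ f(n,k,n-l') \le f(n,l',n-l')+La\big(n,P_{k-l'+1,2^{l'}}\big). \]
   Context: $[n]=\{1,\dots,n\}$. A chain of length $m$ is a sequence of sets $F_1\subsetneq\dots\subsetneq F_m$; a family is $k$-Sperner if it contains no chain of length $k+1$. For a family $\mathcal{F}$ and a set $X$, $\mathcal{F}|_X=\{F\cap X: F\in\mathcal{F}\}$. A family $\mathcal{F}\subseteq 2^{[n]}$ is $l$-trace $k$-Sperner if for every $l$-element $L\subseteq[n]$, $\mathcal{F}|_L$ is $k$-Sperner; $f(n,k,l)$ denotes the maximum size of an $l$-trace $k$-Sperner family $\mathcal{F}\subseteq 2^{[n]}$. A family $\mathcal{F}$ of sets contains a poset $P$ if there is an injective map $i:P\to\mathcal{F}$ such that $p\le_P q$ implies $i(p)\subseteq i(q)$; otherwise $\mathcal{F}$ is $P$-free, and $La(n,P)$ is the maximum size of a $P$-free family $\mathcal{F}\subseteq 2^{[n]}$. For positive integers $h,c$, $T_{h,c}$ is the rooted tree of height $h$ (every root-to-leaf path has $h$ vertices) in which every non-leaf vertex has exactly $c$ children, and $P_{h,c}$ is the poset on the vertices of $T_{h,c}$ whose Hasse diagram is $T_{h,c}$ with all arcs directed towards the root (so each vertex is greater than its children, and the root is the maximum). *)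

theory Defs
  imports Main "HOL-Library.Sublist"
begin

definition has_chain :: "nat set set \<Rightarrow> nat \<Rightarrow> bool" where
  "has_chain G m \<longleftrightarrow> (\<exists>C :: nat \<Rightarrow> nat set.
      (\<forall>i<m. C i \<in> G) \<and> (\<forall>i. Suc i < m \<longrightarrow> C i \<subset> C (Suc i)))"

definition k_Sperner :: "nat \<Rightarrow> nat set set \<Rightarrow> bool" where
  "k_Sperner k G \<longleftrightarrow> \<not> has_chain G (Suc k)"

definition trace :: "nat set set \<Rightarrow> nat set \<Rightarrow> nat set set" where
  "trace F X = (\<lambda>A. A \<inter> X) ` F"

definition trace_Sperner :: "nat \<Rightarrow> nat \<Rightarrow> nat \<Rightarrow> nat set set \<Rightarrow> bool" where
  "trace_Sperner n l k F \<longleftrightarrow>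
     (\<forall>L. L \<subseteq> {1..n} \<and> card L = l \<longrightarrow> k_Sperner k (trace F L))"

definition f :: "nat \<Rightarrow> nat \<Rightarrow> nat \<Rightarrow> nat" where
  "f n k l = Max {card F | F. F \<subseteq> Pow {1..n} \<and> trace_Sperner n l k F}"

definition contains_poset :: "nat set set \<Rightarrow> 'a set \<Rightarrow> ('a \<Rightarrow> 'a \<Rightarrow> bool) \<Rightarrow> bool" where
  "contains_poset F V le \<longleftrightarrow> (\<exists>i. inj_on i V \<and> i ` V \<subseteq> F \<and>
      (\<forall>p\<in>V. \<forall>q\<in>V. le p q \<longrightarrow> i p \<subseteq> i q))"

definition La :: "nat \<Rightarrow> 'a set \<Rightarrow> ('a \<Rightarrow> 'a \<Rightarrow> bool) \<Rightarrow> nat" where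
  "La n V le = Max {card F | F. F \<subseteq> Pow {1..n} \<and> \<not> contains_poset F V le}"

text \<open>Vertices of T_{h,c}: words over {0..<c} of length < h (root = empty word,
  children of w are w @ [j]). Order of P_{h,c}: w \<le> v iff v is a prefix of w
  (each vertex is above its children; root is the maximum).\<close>
definition tree_vertices :: "nat \<Rightarrow> nat \<Rightarrow> nat list set" where
  "tree_vertices h c = {w. length w < h \<and> set w \<subseteq> {..<c}}"

definition tree_le :: "nat list \<Rightarrow> nat list \<Rightarrow> bool" where
  "tree_le w v \<longleftrightarrow> prefix v w"

end

theory Submission
  imports Defs
begin

text \<open>
  Take an extremal family \<open>F\<close> and split it into the set \<open>R\<close> of roots of copies of
  \<open>P = P_{k-l'+1, 2^l'}\<close> in \<open>F\<close> and the rest \<open>F - R\<close>. The rest is \<open>P\<close>-free, since every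
  copy contributes its root to \<open>R\<close>. For \<open>R\<close>, fix \<open>L\<close> with \<open>|L| = n - l'\<close>. Every member
  of \<open>F\<close> has at most \<open>l'\<close> elements outside \<open>L\<close>, so a set has fewer than \<open>2^l'\<close> proper
  subsets with the same trace on \<open>L\<close>; hence among the \<open>2^l'\<close> children of a vertex of a
  copy of \<open>P\<close> one has strictly smaller trace. Descending the copy yields a chain of
  \<open>k - l' + 1\<close> traces with top \<open>R \<inter> L\<close>, and stacking a chain of \<open>l' + 1\<close> traces of \<open>R\<close>
  on it gives a chain of \<open>k + 1\<close> traces of \<open>F\<close>. So \<open>R\<close> is \<open>(n - l')\<close>-trace \<open>l'\<close>-Sperner.
\<close>

definition embeds_poset :: "('a \<Rightarrow> nat set) \<Rightarrow> 'a set \<Rightarrow> ('a \<Rightarrow> 'a \<Rightarrow> bool) \<Rightarrow> nat set set \<Rightarrow> bool"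
  where "embeds_poset i V le F \<longleftrightarrow> inj_on i V \<and> i ` V \<subseteq> F \<and>
           (\<forall>p\<in>V. \<forall>q\<in>V. le p q \<longrightarrow> i p \<subseteq> i q)"

lemma contains_poset_iff_embeds: "contains_poset F V le \<longleftrightarrow> (\<exists>i. embeds_poset i V le F)"
  unfolding contains_poset_def embeds_poset_def by blast

definition chain_of :: "nat set set \<Rightarrow> nat \<Rightarrow> (nat \<Rightarrow> nat set) \<Rightarrow> bool"
  where "chain_of G m C \<longleftrightarrow> (\<forall>i<m. C i \<in> G) \<and> (\<forall>i. Suc i < m \<longrightarrow> C i \<subset> C (Suc i))"

lemma has_chain_iff_chain_of: "has_chain G m \<longleftrightarrow> (\<exists>C. chain_of G m C)"
  unfolding has_chain_def chain_of_def ..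

lemma chain_of_mono: "chain_of G m C \<Longrightarrow> G \<subseteq> H \<Longrightarrow> chain_of H m C"
  unfolding chain_of_def by blast

lemma chain_of_append:
  assumes "chain_of G (Suc a) C" and "chain_of G (Suc b) D" and "C a = D 0"
  shows "chain_of G (Suc (a + b)) (\<lambda>t. if t \<le> a then C t else D (t - a))"
  unfolding chain_of_def
proof (intro conjI allI impI)
  fix t assume "t < Suc (a + b)"
  then show "(if t \<le> a then C t else D (t - a)) \<in> G"
    using assms(1,2) unfolding chain_of_def by auto
next
  fix t assume t: "Suc t < Suc (a + b)"
  consider "t < a" | "t = a" | "a < t" by linarith
  then show "(if t \<le> a then C t else D (t - a)) \<subset> (if Suc t \<le> a then C (Suc t) else D (Suc t - a))"
  proof cases
    case 3
    then have "Suc t - a = Suc (t - a)" by simp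
    with 3 t show ?thesis using assms(2) unfolding chain_of_def by auto
  qed (use assms t in \<open>auto simp: chain_of_def\<close>)
qed

lemma exists_psubset_trace:
  fixes A L :: "'a set" and B :: "'a set set"
  assumes fin: "finite (A - L)" and small: "card (A - L) \<le> l"
    and many: "2 ^ l \<le> card B" and psub: "\<forall>X\<in>B. X \<subset> A"
  shows "\<exists>X\<in>B. X \<inter> L \<subset> A \<inter> L"
proof (rule ccontr)
  assume "\<not> ?thesis"
  with psub have same_trace: "X \<inter> L = A \<inter> L" if "X \<in> B" for X
    using that by blast
  \<comment> \<open>members of \<open>B\<close> are then determined by their parts outside \<open>L\<close>\<close>
  have "inj_on (\<lambda>X. X - L) B"
  proof (rule inj_onI)
    fix X Y assume "X \<in> B" "Y \<in> B" "X - L = Y - L"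
    then show "X = Y" using same_trace[of X] same_trace[of Y] by (metis Int_Diff_Un)
  qed
  moreover have "(\<lambda>X. X - L) ` B \<subseteq> Pow (A - L) - {A - L}"
    using psub same_trace by (fastforce simp: Int_Diff_Un)
  ultimately have "card B \<le> card (Pow (A - L) - {A - L})"
    using fin by (intro card_inj_on_le) auto
  also have "\<dots> = 2 ^ card (A - L) - 1"
    using fin by (simp add: card_Pow)
  also have "\<dots> < 2 ^ l"
  proof -
    have "(2::nat) ^ card (A - L) \<le> 2 ^ l"
      using small by (simp add: power_increasing)
    moreover have "(0::nat) < 2 ^ card (A - L)" by simp
    ultimately show ?thesis by linarith
  qed
  finally show False using many by simp
qed

lemma tree_chain:
  fixes i :: "nat list \<Rightarrow> nat set"
  assumes emb: "embeds_poset i (tree_vertices h (2 ^ l)) tree_le F"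
    and small: "\<forall>A\<in>F. finite (A - L) \<and> card (A - L) \<le> l"
  shows "w \<in> tree_vertices h (2 ^ l) \<Longrightarrow> length w + d < h \<Longrightarrow>
           \<exists>C. chain_of (trace F L) (Suc d) C \<and> C d = i w \<inter> L"
proof (induction d arbitrary: w)
  case 0
  then have "i w \<inter> L \<in> trace F L"
    using emb unfolding embeds_poset_def trace_def by blast
  then show ?case by (intro exI[of _ "\<lambda>_. i w \<inter> L"]) (simp add: chain_of_def)
next
  case (Suc d)
  let ?V = "tree_vertices h (2 ^ l)"
  have child: "w @ [j] \<in> ?V" if "j < 2 ^ l" for j
    using Suc.prems that unfolding tree_vertices_def by auto
  have "i w \<in> F" using emb Suc.prems(1) unfolding embeds_poset_def by blast
  with small have fin: "finite (i w - L)" and few: "card (i w - L) \<le> l" by auto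
  have "inj_on (\<lambda>j. i (w @ [j])) {..<2 ^ l}"
    using emb child unfolding embeds_poset_def by (auto intro!: inj_onI dest: inj_onD)
  then have many: "2 ^ l \<le> card ((\<lambda>j. i (w @ [j])) ` {..<2 ^ l})"
    by (simp add: card_image)
  have "i (w @ [j]) \<subset> i w" if "j < 2 ^ l" for j
  proof
    show "i (w @ [j]) \<subseteq> i w"
      using emb child[OF that] Suc.prems(1) unfolding embeds_poset_def tree_le_def by simp
    show "i (w @ [j]) \<noteq> i w"
      using emb child[OF that] Suc.prems(1) unfolding embeds_poset_def
      by (metis inj_on_contraD append_self_conv list.simps(3))
  qed
  then obtain j where j: "j < 2 ^ l" and shrink: "i (w @ [j]) \<inter> L \<subset> i w \<inter> L"
    using exists_psubset_trace[OF fin few many] by blast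
  obtain C where C: "chain_of (trace F L) (Suc d) C" and top: "C d = i (w @ [j]) \<inter> L"
    using Suc.IH[OF child[OF j]] Suc.prems(2) by auto
  define D where "D t = (if t = 0 then i (w @ [j]) \<inter> L else i w \<inter> L)" for t :: nat
  have "i (w @ [j]) \<in> F" "i w \<in> F"
    using emb child[OF j] Suc.prems(1) unfolding embeds_poset_def by blast+
  then have "chain_of (trace F L) (Suc 1) D"
    using shrink unfolding chain_of_def D_def trace_def by (auto simp: less_Suc_eq)
  from chain_of_append[OF C this] top
  have "chain_of (trace F L) (Suc (Suc d)) (\<lambda>t. if t \<le> d then C t else D (t - d))"
    by (simp add: D_def)
  then show ?case by (intro exI[of _ "\<lambda>t. if t \<le> d then C t else D (t - d)"]) (simp add: D_def)
qed

lemma tree_root_chain: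
  fixes i :: "nat list \<Rightarrow> nat set"
  assumes "embeds_poset i (tree_vertices (Suc h) (2 ^ l)) tree_le F"
    and "\<forall>A\<in>F. finite (A - L) \<and> card (A - L) \<le> l"
  shows "\<exists>C. chain_of (trace F L) (Suc h) C \<and> C h = i [] \<inter> L"
  using tree_chain[OF assms, of "[]" h] by (simp add: tree_vertices_def)

definition tree_roots :: "nat set set \<Rightarrow> nat \<Rightarrow> nat \<Rightarrow> nat set set"
  where "tree_roots F h c = {i [] | i. embeds_poset i (tree_vertices h c) tree_le F}"

lemma root_in_tree_vertices: "0 < h \<Longrightarrow> [] \<in> tree_vertices h c"
  unfolding tree_vertices_def by simp

lemma tree_roots_subset: "0 < h \<Longrightarrow> tree_roots F h c \<subseteq> F"
  unfolding tree_roots_def embeds_poset_def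
  using root_in_tree_vertices by (auto simp: image_subset_iff)

lemma not_contains_tree_Diff_tree_roots:
  assumes "0 < h"
  shows "\<not> contains_poset (F - tree_roots F h c) (tree_vertices h c) tree_le"
proof
  assume "contains_poset (F - tree_roots F h c) (tree_vertices h c) tree_le"
  then obtain i where i: "embeds_poset i (tree_vertices h c) tree_le (F - tree_roots F h c)"
    unfolding contains_poset_iff_embeds by blast
  then have "embeds_poset i (tree_vertices h c) tree_le F"
    unfolding embeds_poset_def by blast
  then have "i [] \<in> tree_roots F h c"
    unfolding tree_roots_def by auto
  moreover have "i ` tree_vertices h c \<subseteq> F - tree_roots F h c"
    using i unfolding embeds_poset_def by simp
  ultimately show False
    using root_in_tree_vertices[OF assms] by (simp add: image_subset_iff)
qed

lemma trace_mono: "F \<subseteq> G \<Longrightarrow> trace F L \<subseteq> trace G L"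
  unfolding trace_def by blast

lemma trace_Sperner_tree_roots:
  assumes F: "F \<subseteq> Pow {1..n}" and sperner: "trace_Sperner n (n - l) k F" and "l \<le> k"
  shows "trace_Sperner n (n - l) l (tree_roots F (k - l + 1) (2 ^ l))"
  unfolding trace_Sperner_def k_Sperner_def has_chain_iff_chain_of
proof (intro allI impI notI)
  let ?R = "tree_roots F (k - l + 1) (2 ^ l)"
  fix L assume L: "L \<subseteq> {1..n} \<and> card L = n - l"
  assume "\<exists>A. chain_of (trace ?R L) (Suc l) A"
  then obtain A where A: "chain_of (trace ?R L) (Suc l) A" by blast
  then have "A 0 \<in> trace ?R L" unfolding chain_of_def by simp
  then obtain i where i: "embeds_poset i (tree_vertices (Suc (k - l)) (2 ^ l)) tree_le F"
    and bottom: "A 0 = i [] \<inter> L"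
    unfolding trace_def tree_roots_def by auto
  have "card ({1..n} - L) \<le> l"
    using L card_Diff_subset[of L "{1..n}"] finite_subset[of L "{1..n}"] by simp
  moreover have "B - L \<subseteq> {1..n} - L" if "B \<in> F" for B
    using F that by blast
  ultimately have small: "\<forall>B\<in>F. finite (B - L) \<and> card (B - L) \<le> l"
    by (meson card_mono finite_Diff finite_atLeastAtMost finite_subset le_trans)
  obtain C where C: "chain_of (trace F L) (Suc (k - l)) C" and top: "C (k - l) = i [] \<inter> L"
    using tree_root_chain[OF i small] by blast
  have "chain_of (trace F L) (Suc l) A"
    using chain_of_mono[OF A trace_mono[OF tree_roots_subset]] by simp
  from chain_of_append[OF C this] top bottom
  have "has_chain (trace F L) (Suc k)"
    unfolding has_chain_iff_chain_of using \<open>l \<le> k\<close> by auto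
  moreover have "k_Sperner k (trace F L)"
    using sperner L unfolding trace_Sperner_def by blast
  ultimately show False unfolding k_Sperner_def by blast
qed

lemma finite_cards_of_subfamilies: "finite {card F | F. F \<subseteq> Pow {1..n::nat} \<and> P F}"
proof (rule finite_subset)
  show "{card F | F. F \<subseteq> Pow {1..n} \<and> P F} \<subseteq> card ` Pow (Pow {1..n})" by auto
qed simp

lemma card_le_f: "F \<subseteq> Pow {1..n} \<Longrightarrow> trace_Sperner n l k F \<Longrightarrow> card F \<le> f n k l"
  unfolding f_def by (rule Max_ge[OF finite_cards_of_subfamilies]) blast

lemma card_le_La: "F \<subseteq> Pow {1..n} \<Longrightarrow> \<not> contains_poset F V le \<Longrightarrow> card F \<le> La n V le"
  unfolding La_def by (rule Max_ge[OF finite_cards_of_subfamilies]) blast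

lemma trace_Sperner_empty: "trace_Sperner n l k {}"
  unfolding trace_Sperner_def k_Sperner_def has_chain_def trace_def by auto

lemma f_attained: "\<exists>F. F \<subseteq> Pow {1..n} \<and> trace_Sperner n l k F \<and> card F = f n k l"
proof -
  let ?S = "{card F | F. F \<subseteq> Pow {1..n} \<and> trace_Sperner n l k F}"
  have "?S \<noteq> {}" using trace_Sperner_empty by blast
  then have "Max ?S \<in> ?S" using finite_cards_of_subfamilies by (rule Max_in[rotated])
  then obtain F where "F \<subseteq> Pow {1..n}" "trace_Sperner n l k F" "card F = Max ?S" by auto
  then show ?thesis unfolding f_def by blast
qed

theorem theorem3p1:
  fixes k l' n :: nat
  assumes "0 < l'" and "l' < k"
  shows "f n k (n - l') \<le> f n l' (n - l')
           + La n (tree_vertices (k - l' + 1) (2 ^ l')) tree_le"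
proof -
  obtain F where F: "F \<subseteq> Pow {1..n}" and sperner: "trace_Sperner n (n - l') k F"
    and extremal: "card F = f n k (n - l')"
    using f_attained[of n "n - l'" k] by blast
  define R where "R = tree_roots F (k - l' + 1) (2 ^ l')"
  have "R \<subseteq> F" unfolding R_def by (simp add: tree_roots_subset)
  have "trace_Sperner n (n - l') l' R"
    unfolding R_def using trace_Sperner_tree_roots[OF F sperner] \<open>l' < k\<close> by simp
  then have "card R \<le> f n l' (n - l')"
    using \<open>R \<subseteq> F\<close> F by (intro card_le_f) auto
  moreover have "card (F - R) \<le> La n (tree_vertices (k - l' + 1) (2 ^ l')) tree_le"
  proof (rule card_le_La)
    show "F - R \<subseteq> Pow {1..n}" using F by blast
    show "\<not> contains_poset (F - R) (tree_vertices (k - l' + 1) (2 ^ l')) tree_le"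
      unfolding R_def by (simp add: not_contains_tree_Diff_tree_roots)
  qed
  moreover have "card F = card R + card (F - R)"
    using card_Int_Diff[of F R] finite_subset[OF F] \<open>R \<subseteq> F\<close> by (simp add: Int_absorb1)
  ultimately show ?thesis using extremal by linarith
qed

end
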